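(* Let $X$ be an $n$-dimensional real normed space and let $Y \subseteq X$ be a $k$-dimensional linear subspace, where $1 \leq k \leq n-1$. Then: (a) $\dim \mathcal{P}_{\min}(X, Y) \leq k(n-k)$, and this estimate is best possible in general: for all $n$ and $1\le k\le n-1$ there exist an $n$-dimensional real normed space $X$ and a $k$-dimensional subspace $Y$ with $\dim \mathcal{P}_{\min}(X, Y) = k(n-k)$. (b) If $\lambda(Y, X)>1$, then $\dim \mathcal{P}_{\min}(X, Y) \leq k(n-k)-2$, and this estimate is best possible in general: for all $n$ and $2\le k\le n-1$ there exist an $n$-dimensional real normed space $X$ and a $k$-dimensional subspace $Y$ with $\lambda(Y,X)>1$ and $\dim \mathcal{P}_{\min}(X, Y) = k(n-k)-2$.
   Context: A projection from a normed space $X$ onto a linear subspace $Y$ is a bounded linear operator $P: X \to Y$ with $P|_Y = \mathrm{id}_Y$; $\mathcal{P}(X,Y)$ denotes the set of all such projections. The relative projection constant is $\lambda(Y, X) = \inf\{\|P\| : P \in \mathcal{P}(X,Y)\}$ (operator norm), and $\mathcal{P}_{\min}(X, Y)$ is the set of projections $P$ with $\|P\| = \lambda(Y,X)$ (minimal projections). $\mathcal{P}_{\min}(X,Y)$ is a convex subset of the space $\mathcal{L}(X,X)$ of linear operators on $X$, and $\dim \mathcal{P}_{\min}(X,Y)$ denotes its affine dimension, i.e. the smallest dimension of an affine subspace of $\mathcal{L}(X,X)$ containing it. *)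

theory Defs
  imports "HOL-Analysis.Analysis"
begin

text \<open>A norm on the real vector space real^'n (an n-dimensional real normed space is,
  up to isometric isomorphism, real^'n equipped with some norm N).\<close>
definition is_norm :: "('a::real_vector \<Rightarrow> real) \<Rightarrow> bool" where
  "is_norm N \<longleftrightarrow> (\<forall>x. N x = 0 \<longleftrightarrow> x = 0) \<and> (\<forall>c x. N (c *\<^sub>R x) = \<bar>c\<bar> * N x)
     \<and> (\<forall>x y. N (x + y) \<le> N x + N y)"

definition op_norm :: "(real^'n \<Rightarrow> real) \<Rightarrow> real^'n^'n \<Rightarrow> real" where
  "op_norm N A = Sup {N (A *v x) | x. N x \<le> 1}"

definition projections :: "(real^'n) set \<Rightarrow> (real^'n^'n) set" where
  "projections Y = {P. (\<forall>x. P *v x \<in> Y) \<and> (\<forall>y\<in>Y. P *v y = y)}"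

definition rel_proj_const :: "(real^'n \<Rightarrow> real) \<Rightarrow> (real^'n) set \<Rightarrow> real" where
  "rel_proj_const N Y = Inf (op_norm N ` projections Y)"

definition min_projections :: "(real^'n \<Rightarrow> real) \<Rightarrow> (real^'n) set \<Rightarrow> (real^'n^'n) set" where
  "min_projections N Y = {P \<in> projections Y. op_norm N P = rel_proj_const N Y}"

end

theory Submission
  imports Defs
begin

(*
  The projections onto Y form an affine space whose direction space, the operators
  with range in Y that vanish on Y, has dimension k (n - k); this gives (a).

  For (b) let P0 be a relative interior point of the minimal projections and call (x, a) a
  norming pair of P0 if N x \<le> 1, a is in the dual unit ball and a (P0 x) = \<lambda>.  The linear
  functional D \<mapsto> a (D x) vanishes on the directions of the minimal projections.  If these had
  codimension at most 1, all such functionals would be proportional.  Moving P0 against a direction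
  on which one of them equals \<lambda> produces, by compactness, a second norming pair whose functional is
  a non-positive multiple of the first, and testing both on rank-one directions forces \<lambda> \<le> 1.

  Equality in (a) holds for the l1 norm and a coordinate subspace; equality in (b) for an explicit
  norm with \<lambda> = 4/3 whose minimal projections contain a neighbourhood of one of them inside a
  (k (n - k) - 2)-dimensional family.
*)

section \<open>Norms on Euclidean spaces\<close>

lemma convex_sublevel_set:
  assumes "convex_on UNIV f"
  shows "convex {x. f x \<le> c}"
proof (rule convexI)
  fix x y :: 'a and u v :: real
  assume "x \<in> {x. f x \<le> c}" "y \<in> {x. f x \<le> c}" "0 \<le> u" "0 \<le> v" "u + v = 1"
  then have "f (u *\<^sub>R x + v *\<^sub>R y) \<le> max (f x) (f y)" "max (f x) (f y) \<le> c"
    using convex_lower[OF assms] by auto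
  then have "f (u *\<^sub>R x + v *\<^sub>R y) \<le> c" by (rule order_trans)
  then show "u *\<^sub>R x + v *\<^sub>R y \<in> {x. f x \<le> c}" by (simp only: mem_Collect_eq)
qed

definition dual_unit_ball :: "('a::real_inner \<Rightarrow> real) \<Rightarrow> 'a set" where
  "dual_unit_ball N = {a. \<forall>y. a \<bullet> y \<le> N y}"

context
  fixes N :: "'a::euclidean_space \<Rightarrow> real"
  assumes N: "is_norm N"
begin

lemma is_norm_eq_0_iff: "N x = 0 \<longleftrightarrow> x = 0"
  using N unfolding is_norm_def by auto

lemma is_norm_scaleR: "N (c *\<^sub>R x) = \<bar>c\<bar> * N x"
  using N unfolding is_norm_def by auto

lemma is_norm_triangle: "N (x + y) \<le> N x + N y"
  using N unfolding is_norm_def by auto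

lemma is_norm_0 [simp]: "N 0 = 0"
  using is_norm_eq_0_iff by simp

lemma is_norm_minus: "N (- x) = N x"
  using is_norm_scaleR[of "-1" x] by simp

lemma is_norm_nonneg: "0 \<le> N x"
  using is_norm_triangle[of x "- x"] by (simp add: is_norm_minus)

lemma is_norm_pos: "x \<noteq> 0 \<Longrightarrow> 0 < N x"
  using is_norm_nonneg[of x] is_norm_eq_0_iff[of x] by linarith

lemma is_norm_diff_le: "N (x - y) \<le> N x + N y"
  using is_norm_triangle[of x "- y"] by (simp add: is_norm_minus)

lemma convex_on_is_norm: "convex_on UNIV N"
proof (rule convex_onI)
  fix t :: real and x y :: 'a
  assume "0 < t" "t < 1"
  then show "N ((1 - t) *\<^sub>R x + t *\<^sub>R y) \<le> (1 - t) * N x + t * N y"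
    using is_norm_triangle[of "(1 - t) *\<^sub>R x" "t *\<^sub>R y"] by (simp add: is_norm_scaleR)
qed simp

lemma continuous_on_is_norm: "continuous_on S N"
  using convex_on_continuous[OF open_UNIV convex_on_is_norm] continuous_on_subset by blast

lemma is_norm_equivalent_norm: "\<exists>c C. 0 < c \<and> 0 < C \<and> (\<forall>x. c * norm x \<le> N x \<and> N x \<le> C * norm x)"
proof -
  have S: "compact (sphere (0::'a) 1)" "sphere (0::'a) 1 \<noteq> {}" by simp_all
  obtain z where z: "z \<in> sphere 0 1" "\<And>y. y \<in> sphere 0 1 \<Longrightarrow> N z \<le> N y"
    using continuous_attains_inf[OF S continuous_on_is_norm] by blast
  obtain w where w: "\<And>y. y \<in> sphere 0 1 \<Longrightarrow> N y \<le> N w"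
    using continuous_attains_sup[OF S continuous_on_is_norm] by blast
  have "N z * norm x \<le> N x \<and> N x \<le> N w * norm x" for x
  proof (cases "x = 0")
    case False
    then have "x /\<^sub>R norm x \<in> sphere 0 1" by simp
    from z(2)[OF this] w[OF this] False show ?thesis by (simp add: is_norm_scaleR field_simps)
  qed simp
  moreover have "0 < N z" using z(1) by (intro is_norm_pos) auto
  moreover have "N z \<le> N w" using z by (intro w) auto
  ultimately show ?thesis by (metis order_less_le_trans)
qed

lemma compact_is_norm_sublevel: "compact {x. N x \<le> r}"
proof -
  obtain c where c: "c > 0" "\<And>x. c * norm x \<le> N x" using is_norm_equivalent_norm by blast
  have "{x. N x \<le> r} \<subseteq> cball 0 (r / c)"
    using c by (auto simp: field_simps) (metis order_trans mult.commute)
  then have "bounded {x. N x \<le> r}" by (rule bounded_subset[OF bounded_cball])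
  moreover have "closed {x. N x \<le> r}"
    using closed_Collect_le[OF continuous_on_is_norm continuous_on_const] by simp
  ultimately show ?thesis by (simp add: compact_eq_bounded_closed)
qed

lemma compact_dual_unit_ball: "compact (dual_unit_ball N)"
proof -
  obtain C where C: "\<And>x. N x \<le> C * norm x" using is_norm_equivalent_norm by blast
  have "norm a \<le> \<bar>C\<bar>" if "a \<in> dual_unit_ball N" for a
  proof -
    have "norm a * norm a = a \<bullet> a" by (simp add: dot_square_norm power2_eq_square)
    also have "\<dots> \<le> N a" using that unfolding dual_unit_ball_def by blast
    also have "\<dots> \<le> C * norm a" by (rule C)
    finally have "norm a * norm a \<le> C * norm a" .
    then show ?thesis by (cases "a = 0") (auto dest: mult_right_le_imp_le)
  qed
  then have "bounded (dual_unit_ball N)" by (auto simp: bounded_iff)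
  moreover have "closed (dual_unit_ball N)"
    unfolding dual_unit_ball_def by (auto intro!: closed_Collect_all closed_Collect_le continuous_intros)
  ultimately show ?thesis by (simp add: compact_eq_bounded_closed)
qed

lemma supporting_functional_unit_sphere:
  assumes "N u = 1"
  shows "\<exists>c. 0 < c \<bullet> u \<and> (\<forall>y. c \<bullet> y \<le> (c \<bullet> u) * N y)"
proof -
  define B where "B = {y. N y \<le> 1}"
  have convB: "convex B" unfolding B_def by (rule convex_sublevel_set[OF convex_on_is_norm])
  have uB: "u \<in> B" using assms by (simp add: B_def)
  have u_boundary: "u \<notin> rel_interior B"
  proof
    assume "u \<in> rel_interior B"
    moreover have "0 \<in> affine hull B" by (intro hull_inc) (simp add: B_def is_norm_0)
    ultimately obtain e where "e > 1" "(1 - e) *\<^sub>R 0 + e *\<^sub>R u \<in> B"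
      using convex_rel_interior_if2[OF convB] by blast
    then show False using assms by (simp add: B_def is_norm_scaleR)
  qed
  obtain b where "b \<noteq> 0" and b: "\<And>y. y \<in> B \<Longrightarrow> b \<bullet> u \<le> b \<bullet> y"
    using supporting_hyperplane_rel_boundary[OF convB uB u_boundary] by metis
  define c where "c = - b"
  have le: "c \<bullet> y \<le> (c \<bullet> u) * N y" for y
  proof (cases "y = 0")
    case False
    have Ny: "0 < N y" using False by (rule is_norm_pos)
    then have "y /\<^sub>R N y \<in> B" by (simp add: B_def is_norm_scaleR)
    from b[OF this] have "c \<bullet> (y /\<^sub>R N y) \<le> c \<bullet> u" by (simp add: c_def)
    with Ny show ?thesis by (simp add: field_simps)
  qed (simp add: is_norm_0)
  have "0 < c \<bullet> c" using \<open>b \<noteq> 0\<close> by (simp add: c_def)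
  also have "\<dots> \<le> (c \<bullet> u) * N c" by (rule le)
  finally have "0 < c \<bullet> u" using is_norm_nonneg[of c] by (simp add: zero_less_mult_iff)
  with le show ?thesis by blast
qed

lemma exists_norming_functional: "\<exists>a\<in>dual_unit_ball N. a \<bullet> z = N z"
proof (cases "z = 0")
  case True
  then show ?thesis by (intro bexI[of _ 0]) (auto simp: dual_unit_ball_def is_norm_nonneg is_norm_0)
next
  case False
  define u where "u = z /\<^sub>R N z"
  have Nz: "0 < N z" using False by (rule is_norm_pos)
  then have "N u = 1" by (simp add: u_def is_norm_scaleR)
  then obtain c where pos: "0 < c \<bullet> u" and le: "\<And>y. c \<bullet> y \<le> (c \<bullet> u) * N y"
    using supporting_functional_unit_sphere by blast
  define a where "a = c /\<^sub>R (c \<bullet> u)"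
  have "a \<bullet> y \<le> N y" for y
    using le[of y] pos by (simp add: a_def field_simps)
  moreover have "a \<bullet> z = N z"
  proof -
    have "a \<bullet> z = a \<bullet> (N z *\<^sub>R u)" using Nz by (simp add: u_def)
    also have "\<dots> = N z" using pos by (simp add: a_def)
    finally show ?thesis .
  qed
  ultimately show ?thesis by (auto simp: dual_unit_ball_def)
qed

end

section \<open>The operator norm\<close>

context
  fixes N :: "real^'n \<Rightarrow> real"
  assumes N: "is_norm N"
begin

lemma bdd_above_op_norm_set: "bdd_above {N (A *v x) | x. N x \<le> 1}"
proof -
  obtain c C where c: "0 < c" "\<And>x. c * norm x \<le> N x" and C: "0 < C" "\<And>x. N x \<le> C * norm x"
    using is_norm_equivalent_norm[OF N] by blast
  obtain K where K: "0 < K" "\<And>x. norm (A *v x) \<le> norm x * K"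
    using bounded_linear.pos_bounded[OF matrix_vector_mul_bounded_linear] by blast
  have "N (A *v x) \<le> C * (1 / c * K)" if "N x \<le> 1" for x
  proof -
    have "norm x \<le> 1 / c" using c(2)[of x] that c(1) by (simp add: field_simps)
    have "N (A *v x) \<le> C * (norm x * K)" using C K(2)[of x] by (meson mult_left_mono less_imp_le order_trans)
    also have "\<dots> \<le> C * (1 / c * K)"
      using \<open>norm x \<le> 1 / c\<close> C(1) K(1) by (intro mult_left_mono mult_right_mono) auto
    finally show ?thesis .
  qed
  then show ?thesis unfolding bdd_above_def by blast
qed

lemma op_norm_upper: "N x \<le> 1 \<Longrightarrow> N (A *v x) \<le> op_norm N A"
  unfolding op_norm_def by (rule cSup_upper[OF _ bdd_above_op_norm_set]) blast

lemma op_norm_least: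
  assumes "\<And>x. N x \<le> 1 \<Longrightarrow> N (A *v x) \<le> b"
  shows "op_norm N A \<le> b"
proof -
  have "N 0 \<le> 1" by (simp add: is_norm_0[OF N])
  then show ?thesis unfolding op_norm_def using assms by (intro cSup_least) blast+
qed

lemma op_norm_nonneg: "0 \<le> op_norm N A"
  using op_norm_upper[of 0 A] by (simp add: is_norm_0[OF N])

lemma op_norm_attained: "\<exists>x. N x \<le> 1 \<and> N (A *v x) = op_norm N A"
proof -
  have "continuous_on {x. N x \<le> 1} (N \<circ> (*v) A)"
    by (intro continuous_on_compose linear_continuous_on matrix_vector_mul_bounded_linear
        continuous_on_is_norm[OF N])
  moreover have "0 \<in> {x. N x \<le> 1}" by (simp add: is_norm_0[OF N])
  then have "{x. N x \<le> 1} \<noteq> {}" by blast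
  ultimately obtain x where x: "N x \<le> 1" "\<And>y. N y \<le> 1 \<Longrightarrow> N (A *v y) \<le> N (A *v x)"
    using continuous_attains_sup[OF compact_is_norm_sublevel[OF N]] by (metis comp_apply mem_Collect_eq)
  then have "op_norm N A \<le> N (A *v x)" by (intro op_norm_least) blast
  with x(1) op_norm_upper[OF x(1), of A] show ?thesis by (intro exI[of _ x]) simp
qed

lemma convex_on_op_norm: "convex_on UNIV (op_norm N)"
proof (rule convex_onI)
  fix t :: real and A B :: "real^'n^'n"
  assume t: "0 < t" "t < 1"
  show "op_norm N ((1 - t) *\<^sub>R A + t *\<^sub>R B) \<le> (1 - t) * op_norm N A + t * op_norm N B"
  proof (rule op_norm_least)
    fix x assume x: "N x \<le> 1"
    have "N (((1 - t) *\<^sub>R A + t *\<^sub>R B) *v x) \<le> (1 - t) * N (A *v x) + t * N (B *v x)"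
      using is_norm_triangle[OF N, of "(1 - t) *\<^sub>R (A *v x)" "t *\<^sub>R (B *v x)"] t
      by (simp add: matrix_vector_mult_add_rdistrib scaleR_matrix_vector_assoc[symmetric] is_norm_scaleR[OF N])
    also have "\<dots> \<le> (1 - t) * op_norm N A + t * op_norm N B"
      using t op_norm_upper[OF x, of A] op_norm_upper[OF x, of B]
      by (intro add_mono mult_left_mono) auto
    finally show "N (((1 - t) *\<^sub>R A + t *\<^sub>R B) *v x) \<le> (1 - t) * op_norm N A + t * op_norm N B" .
  qed
qed simp

end

section \<open>Projections and their directions\<close>

definition orthogonal_complement :: "'a::real_inner set \<Rightarrow> 'a set" where
  "orthogonal_complement Y = {z. \<forall>y\<in>Y. z \<bullet> y = 0}"

lemma subspace_orthogonal_complement: "subspace (orthogonal_complement Y)"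
  unfolding subspace_def orthogonal_complement_def by (auto simp: inner_add_left)

lemma dim_orthogonal_complement:
  fixes Y :: "'a::euclidean_space set"
  assumes "subspace Y"
  shows "dim (orthogonal_complement Y) + dim Y = DIM('a)"
proof -
  have "orthogonal_complement Y = {z \<in> UNIV. \<forall>y\<in>Y. orthogonal y z}"
    by (auto simp: orthogonal_complement_def orthogonal_def inner_commute)
  then show ?thesis using dim_subspace_orthogonal_to_vectors[OF assms subspace_UNIV] by simp
qed

lemma orthogonal_decomposition:
  fixes Y :: "'a::euclidean_space set"
  assumes "subspace Y"
  obtains p where "p \<in> orthogonal_complement Y" "x - p \<in> Y"
proof -
  obtain y p where "y \<in> span Y" "\<And>w. w \<in> span Y \<Longrightarrow> orthogonal p w" "x = y + p"
    using orthogonal_subspace_decomp_exists by metis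
  moreover have "span Y = Y" using assms by (simp add: span_eq_iff)
  ultimately show ?thesis
    by (intro that[of p]) (auto simp: orthogonal_complement_def orthogonal_def)
qed

lemma mem_subspace_if_orthogonal_complement:
  fixes Y :: "'a::euclidean_space set"
  assumes "subspace Y" "\<And>r. r \<in> orthogonal_complement Y \<Longrightarrow> r \<bullet> v = 0"
  shows "v \<in> Y"
proof -
  obtain p where p: "p \<in> orthogonal_complement Y" "v - p \<in> Y"
    using orthogonal_decomposition[OF assms(1)] .
  then have "p \<bullet> (v - p) = 0" by (simp add: orthogonal_complement_def)
  with assms(2)[OF p(1)] have "p = 0" by (simp add: inner_diff_right)
  with p(2) show ?thesis by simp
qed

lemma orthonormal_expansion:
  fixes B :: "'a::euclidean_space set"
  assumes "finite B" "pairwise orthogonal B" "\<And>b. b \<in> B \<Longrightarrow> norm b = 1" "w \<in> span B"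
  shows "w = (\<Sum>b\<in>B. (b \<bullet> w) *\<^sub>R b)"
proof -
  obtain c where c: "w = (\<Sum>b\<in>B. c b *\<^sub>R b)" using assms(4) span_finite[OF assms(1)] by auto
  have "b0 \<bullet> w = c b0" if "b0 \<in> B" for b0
  proof -
    have "b0 \<bullet> w = (\<Sum>b\<in>B. c b * (b0 \<bullet> b))" unfolding c by (simp add: inner_sum_right)
    also have "\<dots> = (\<Sum>b\<in>{b0}. c b * (b0 \<bullet> b))"
      by (rule sum.mono_neutral_right) (use assms(1,2) that in \<open>auto simp: pairwise_def orthogonal_def\<close>)
    also have "\<dots> = c b0" using assms(3)[OF that] by (simp add: dot_square_norm)
    finally show ?thesis .
  qed
  then show ?thesis unfolding c by (intro sum.cong) auto
qed

definition outer_prod :: "real^'n \<Rightarrow> real^'m \<Rightarrow> real^'m^'n" where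
  "outer_prod u w = (\<chi> i j. u$i * w$j)"

lemma outer_prod_mult_vec: "outer_prod u w *v x = (w \<bullet> x) *\<^sub>R u"
  by (simp add: vec_eq_iff outer_prod_def matrix_vector_mult_def inner_vec_def sum_distrib_left
      sum_distrib_right algebra_simps)

lemma outer_prod_sum_scaleR_left: "outer_prod (\<Sum>i\<in>S. c i *\<^sub>R u i) w = (\<Sum>i\<in>S. c i *\<^sub>R outer_prod (u i) w)"
  by (induction S rule: infinite_finite_induct) (auto simp: vec_eq_iff outer_prod_def algebra_simps)

definition proj_directions :: "(real^'n) set \<Rightarrow> (real^'n^'n) set" where
  "proj_directions Y = {D. (\<forall>x. D *v x \<in> Y) \<and> (\<forall>y\<in>Y. D *v y = 0)}"

lemma subspace_proj_directions: "subspace Y \<Longrightarrow> subspace (proj_directions Y)"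
  unfolding subspace_def proj_directions_def
  by (auto simp: matrix_vector_mult_add_rdistrib scaleR_matrix_vector_assoc[symmetric])

lemma outer_prod_in_proj_directions:
  assumes "subspace Y" "u \<in> Y" "w \<in> orthogonal_complement Y"
  shows "outer_prod u w \<in> proj_directions Y"
  using assms by (auto simp: proj_directions_def orthogonal_complement_def outer_prod_mult_vec subspace_scale)

lemma projections_diff_in_proj_directions:
  assumes "subspace Y" "P \<in> projections Y" "Q \<in> projections Y"
  shows "Q - P \<in> proj_directions Y"
  using assms unfolding proj_directions_def projections_def
  by (auto simp: matrix_vector_mult_diff_rdistrib subspace_diff)

lemma projections_add_proj_directions:
  assumes "subspace Y" "P \<in> projections Y" "D \<in> proj_directions Y"
  shows "P + D \<in> projections Y"
  using assms unfolding proj_directions_def projections_def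
  by (auto simp: matrix_vector_mult_add_rdistrib subspace_add)

lemma sum_mult_vec: "(\<Sum>i\<in>S. A i) *v x = (\<Sum>i\<in>S. A i *v x)"
  by (induction S rule: infinite_finite_induct) (simp_all add: matrix_vector_mult_add_rdistrib)

lemma mult_vec_sum:
  fixes A :: "real^'n^'m"
  shows "A *v (\<Sum>i\<in>S. c i *\<^sub>R v i) = (\<Sum>i\<in>S. c i *\<^sub>R (A *v v i))"
  by (induction S rule: infinite_finite_induct)
    (simp_all add: matrix_vector_right_distrib matrix_vector_mult_scaleR)

lemma proj_directions_eq_sum_outer_prod:
  fixes D :: "real^'n^'n"
  assumes "subspace Y" and D: "D \<in> proj_directions Y"
    and B: "span B = orthogonal_complement Y" "finite B" "pairwise orthogonal B" "\<And>b. b \<in> B \<Longrightarrow> norm b = 1"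
  shows "D = (\<Sum>b\<in>B. outer_prod (D *v b) b)"
proof (rule matrix_eq[THEN iffD2], intro allI)
  fix x :: "real^'n"
  obtain p where p: "p \<in> orthogonal_complement Y" "x - p \<in> Y" using orthogonal_decomposition[OF assms(1)] .
  have B_orth: "b \<bullet> p = b \<bullet> x" if "b \<in> B" for b
  proof -
    have "b \<in> orthogonal_complement Y" using that B(1) span_base by blast
    with p(2) have "b \<bullet> (x - p) = 0" by (simp add: orthogonal_complement_def)
    then show ?thesis by (simp add: inner_diff_right)
  qed
  have "D *v (x - p) = 0" using D p(2) unfolding proj_directions_def by blast
  then have "D *v x = D *v p" by (simp add: matrix_vector_mult_diff_distrib)
  also have "p = (\<Sum>b\<in>B. (b \<bullet> p) *\<^sub>R b)"
    using p(1) B by (intro orthonormal_expansion) simp_all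
  also have "D *v (\<Sum>b\<in>B. (b \<bullet> p) *\<^sub>R b) = (\<Sum>b\<in>B. (b \<bullet> x) *\<^sub>R (D *v b))"
    using B_orth by (simp add: mult_vec_sum)
  also have "\<dots> = (\<Sum>b\<in>B. outer_prod (D *v b) b) *v x"
    by (simp add: sum_mult_vec outer_prod_mult_vec)
  finally show "D *v x = (\<Sum>b\<in>B. outer_prod (D *v b) b) *v x" .
qed

lemma dim_proj_directions_le:
  fixes Y :: "(real^'n) set"
  assumes "subspace Y"
  shows "int (dim (proj_directions Y)) \<le> int (dim Y) * (int CARD('n) - int (dim Y))"
proof -
  obtain BY where "BY \<subseteq> Y" and BY: "independent BY" "Y \<subseteq> span BY" "card BY = dim Y"
    by (rule basis_exists)
  obtain BZ where "BZ \<subseteq> orthogonal_complement Y" and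
    BZ: "pairwise orthogonal BZ" "\<And>x. x \<in> BZ \<Longrightarrow> norm x = 1"
    "independent BZ" "card BZ = dim (orthogonal_complement Y)" "span BZ = orthogonal_complement Y"
    using orthonormal_basis_subspace[OF subspace_orthogonal_complement[of Y]] by blast
  have fin: "finite BY" "finite BZ" using BY(1) BZ(3) by (simp_all add: independent_imp_finite)
  define G where "G = (\<lambda>(y, z). outer_prod y z) ` (BY \<times> BZ)"
  have "proj_directions Y \<subseteq> span G"
  proof
    fix D assume D: "D \<in> proj_directions Y"
    have "outer_prod (D *v z) z \<in> span G" if "z \<in> BZ" for z
    proof -
      have "D *v z \<in> span BY" using D BY(2) unfolding proj_directions_def by auto
      then obtain c where "D *v z = (\<Sum>y\<in>BY. c y *\<^sub>R y)" using span_finite[OF fin(1)] by auto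
      then have "outer_prod (D *v z) z = (\<Sum>y\<in>BY. c y *\<^sub>R outer_prod y z)"
        by (simp add: outer_prod_sum_scaleR_left)
      also have "\<dots> \<in> span G"
        using that by (intro span_sum span_scale span_base) (force simp: G_def)
      finally show ?thesis .
    qed
    then have "(\<Sum>z\<in>BZ. outer_prod (D *v z) z) \<in> span G" by (intro span_sum)
    then show "D \<in> span G"
      using proj_directions_eq_sum_outer_prod[OF assms D BZ(5) fin(2) BZ(1,2)] by simp
  qed
  then have "dim (proj_directions Y) \<le> card G" using fin by (intro dim_le_card) (simp_all add: G_def)
  also have "\<dots> \<le> card BY * card BZ"
    unfolding G_def using card_image_le[of "BY \<times> BZ"] fin by (simp add: card_cartesian_product)
  finally have "int (dim (proj_directions Y)) \<le> int (card BY) * int (card BZ)" by (simp flip: of_nat_mult)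
  moreover have "int (card BZ) = int CARD('n) - int (dim Y)"
    using BZ(4) dim_orthogonal_complement[OF assms] by simp
  ultimately show ?thesis using BY(3) by simp
qed

lemma rel_proj_const_le:
  assumes "is_norm N" "P \<in> projections Y"
  shows "rel_proj_const N Y \<le> op_norm N P"
  unfolding rel_proj_const_def
  by (rule cInf_lower) (use assms op_norm_nonneg[OF assms(1)] in \<open>auto simp: bdd_below_def\<close>)

lemma rel_proj_const_ge:
  assumes "P \<in> projections Y" "\<And>Q. Q \<in> projections Y \<Longrightarrow> c \<le> op_norm N Q"
  shows "c \<le> rel_proj_const N Y"
  unfolding rel_proj_const_def by (rule cInf_greatest) (use assms in auto)

lemma min_projections_iff:
  assumes "is_norm N"
  shows "P \<in> min_projections N Y \<longleftrightarrow> P \<in> projections Y \<and> op_norm N P \<le> rel_proj_const N Y"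
  using rel_proj_const_le[OF assms] by (auto simp: min_projections_def intro: antisym)

lemma affine_projections: "subspace Y \<Longrightarrow> affine (projections Y)"
  unfolding affine_def projections_def
  by (auto simp: matrix_vector_mult_add_rdistrib scaleR_matrix_vector_assoc[symmetric]
      subspace_add subspace_scale simp flip: scaleR_add_left)

lemma convex_min_projections:
  assumes "is_norm N" "subspace Y"
  shows "convex (min_projections N Y)"
proof -
  have "min_projections N Y = projections Y \<inter> {P. op_norm N P \<le> rel_proj_const N Y}"
    using min_projections_iff[OF assms(1)] by blast
  then show ?thesis
    using affine_imp_convex[OF affine_projections[OF assms(2)]]
      convex_sublevel_set[OF convex_on_op_norm[OF assms(1)]] by (simp add: convex_Int)
qed

lemma aff_dim_min_projections_le:
  assumes "subspace Y"
  shows "aff_dim (min_projections N Y) \<le> int (dim (proj_directions Y))"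
proof (cases "min_projections N Y = {}")
  case False
  then obtain P where P: "P \<in> min_projections N Y" by blast
  then have "(\<lambda>Q. Q - P) ` min_projections N Y \<subseteq> proj_directions Y"
    using projections_diff_in_proj_directions[OF assms] by (auto simp: min_projections_def)
  then have "dim ((\<lambda>Q. Q - P) ` min_projections N Y) \<le> dim (proj_directions Y)"
    by (rule dim_subset)
  then show ?thesis using aff_dim_eq_dim_subtract[OF hull_inc[OF P]] by simp
qed simp

section \<open>Norming pairs\<close>

lemma reciprocal_bounds_imp_le_1:
  fixes l t k :: real
  assumes "0 < t" "0 < k" "l * (1 + t) \<le> 1 + k" "l * (1 + 1 / t) \<le> 1 + 1 / k"
  shows "l \<le> 1"
proof -
  have "l * (1 + 1 / t) * (t * k) \<le> (1 + 1 / k) * (t * k)"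
    using assms(1,2,4) by (intro mult_right_mono) auto
  moreover have "l * (1 + 1 / t) * (t * k) = l * (1 + t) * k" "(1 + 1 / k) * (t * k) = t * (1 + k)"
    using assms(1,2) by (simp_all add: field_simps)
  ultimately have "l * (1 + t) * k \<le> t * (1 + k)" by simp
  with assms(3) have "l * (1 + t) * (1 + k) \<le> (1 + t) * (1 + k)" by (simp add: algebra_simps)
  then show ?thesis using assms(1,2) by (simp add: mult_le_cancel_right_pos)
qed

definition norming_pairs :: "(real^'n \<Rightarrow> real) \<Rightarrow> real^'n^'n \<Rightarrow> ((real^'n) \<times> (real^'n)) set" where
  "norming_pairs N P = {(x, a). N x \<le> 1 \<and> a \<in> dual_unit_ball N \<and> a \<bullet> (P *v x) = op_norm N P}"

lemma linear_inner_mult_vec: "linear (\<lambda>A :: real^'m^'n. a \<bullet> (A *v x))"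
  by (rule linearI) (simp_all add: matrix_vector_mult_add_rdistrib scaleR_matrix_vector_assoc[symmetric] inner_add_right)

context
  fixes N :: "real^'n \<Rightarrow> real"
  assumes N: "is_norm N"
begin

lemma inner_mult_vec_le_op_norm:
  assumes "N x \<le> 1" "a \<in> dual_unit_ball N"
  shows "a \<bullet> (P *v x) \<le> op_norm N P"
proof -
  have "a \<bullet> (P *v x) \<le> N (P *v x)" using assms(2) by (simp add: dual_unit_ball_def)
  also have "\<dots> \<le> op_norm N P" by (rule op_norm_upper[OF N assms(1)])
  finally show ?thesis .
qed

lemma norming_pairs_nonempty: "\<exists>x a. (x, a) \<in> norming_pairs N P"
proof -
  obtain x where x: "N x \<le> 1" "N (P *v x) = op_norm N P" using op_norm_attained[OF N] by blast
  moreover obtain a where "a \<in> dual_unit_ball N" "a \<bullet> (P *v x) = N (P *v x)"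
    using exists_norming_functional[OF N] by blast
  ultimately show ?thesis unfolding norming_pairs_def by auto
qed

text \<open>Norming pairs of \<open>P - s D\<close> lie in a compact set; for \<open>s \<rightarrow> 0\<close> they accumulate at a norming pair of \<open>P\<close>.\<close>
lemma exists_norming_pair_nonpos:
  assumes le: "\<And>s. 0 < s \<Longrightarrow> op_norm N P \<le> op_norm N (P - s *\<^sub>R D)"
  shows "\<exists>x a. (x, a) \<in> norming_pairs N P \<and> a \<bullet> (D *v x) \<le> 0"
proof -
  define K where "K = {x. N x \<le> 1} \<times> dual_unit_ball N"
  define g where "g z = snd z \<bullet> (P *v fst z)" for z
  define h where "h z = snd z \<bullet> (D *v fst z)" for z
  define s :: "nat \<Rightarrow> real" where "s m = inverse (Suc m)" for m
  have g_le: "g z \<le> op_norm N P" if "z \<in> K" for z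
    using that inner_mult_vec_le_op_norm by (auto simp: K_def g_def)
  have "\<exists>z \<in> K. op_norm N P \<le> g z - s m * h z" for m
  proof -
    obtain x a where "(x, a) \<in> norming_pairs N (P - s m *\<^sub>R D)" using norming_pairs_nonempty by blast
    moreover have "op_norm N P \<le> op_norm N (P - s m *\<^sub>R D)" by (rule le) (simp add: s_def)
    ultimately show ?thesis
      by (intro bexI[of _ "(x, a)"]) (auto simp: norming_pairs_def K_def g_def h_def
          matrix_vector_mult_diff_rdistrib scaleR_matrix_vector_assoc[symmetric] inner_diff_right)
  qed
  then obtain z where z: "\<And>m. z m \<in> K" "\<And>m. op_norm N P \<le> g (z m) - s m * h (z m)" by metis
  have h_nonpos: "h (z m) \<le> 0" for m
  proof -
    have "s m * h (z m) \<le> 0" using g_le[OF z(1)[of m]] z(2)[of m] by linarith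
    moreover have "0 < s m" by (simp add: s_def)
    ultimately show ?thesis by (simp add: mult_le_0_iff)
  qed
  have "compact K" unfolding K_def
    by (intro compact_Times compact_is_norm_sublevel[OF N] compact_dual_unit_ball[OF N])
  then obtain l r where l: "l \<in> K" "strict_mono r" "(z \<circ> r) \<longlonglongrightarrow> l"
    using z(1) unfolding compact_def by metis
  have lim_fst: "(\<lambda>m. fst (z (r m))) \<longlonglongrightarrow> fst l" and lim_snd: "(\<lambda>m. snd (z (r m))) \<longlonglongrightarrow> snd l"
    using tendsto_fst[OF l(3)] tendsto_snd[OF l(3)] by (simp_all add: o_def)
  have lim_g: "(\<lambda>m. g (z (r m))) \<longlonglongrightarrow> g l" and lim_h: "(\<lambda>m. h (z (r m))) \<longlonglongrightarrow> h l"
    unfolding g_def h_def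
    by (intro tendsto_inner lim_snd bounded_linear.tendsto[OF matrix_vector_mul_bounded_linear] lim_fst)+
  have lim_s: "(\<lambda>m. s (r m)) \<longlonglongrightarrow> 0"
    using LIMSEQ_subseq_LIMSEQ[OF LIMSEQ_inverse_real_of_nat l(2)] by (simp add: s_def o_def)
  have "op_norm N P \<le> g l - 0 * h l"
    by (rule LIMSEQ_le_const[OF tendsto_diff[OF lim_g tendsto_mult[OF lim_s lim_h]]]) (use z(2) in auto)
  then have "g l = op_norm N P" using g_le[OF l(1)] by simp
  moreover have "h l \<le> 0" by (rule LIMSEQ_le_const2[OF lim_h]) (use h_nonpos in auto)
  ultimately show ?thesis
    using l(1) by (intro exI[of _ "fst l"] exI[of _ "snd l"]) (auto simp: norming_pairs_def K_def g_def h_def)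
qed

lemma norming_point_notin_subspace:
  assumes "P \<in> projections Y" "1 < op_norm N P" "(x, a) \<in> norming_pairs N P"
  shows "x \<notin> Y"
proof
  assume "x \<in> Y"
  then have "op_norm N P = a \<bullet> x" using assms(1,3) by (simp add: projections_def norming_pairs_def)
  also have "\<dots> \<le> N x" using assms(3) by (simp add: norming_pairs_def dual_unit_ball_def)
  also have "\<dots> \<le> 1" using assms(3) by (simp add: norming_pairs_def)
  finally show False using assms(2) by simp
qed

lemma exists_proj_direction_attaining:
  assumes "subspace Y" "P \<in> projections Y" "1 < op_norm N P" "(x, a) \<in> norming_pairs N P"
  shows "\<exists>D\<in>proj_directions Y. a \<bullet> (D *v x) = op_norm N P"
proof -
  obtain p where p: "p \<in> orthogonal_complement Y" "x - p \<in> Y"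
    using orthogonal_decomposition[OF assms(1)] .
  have "p \<noteq> 0" using p(2) norming_point_notin_subspace[OF assms(2-4)] by auto
  have "p \<bullet> (x - p) = 0" using p by (simp add: orthogonal_complement_def)
  then have px: "p \<bullet> x = p \<bullet> p" by (simp add: inner_diff_right)
  define D where "D = outer_prod (P *v x) (p /\<^sub>R (p \<bullet> p))"
  have "D \<in> proj_directions Y"
    unfolding D_def using assms(2) p(1) subspace_orthogonal_complement[of Y]
    by (intro outer_prod_in_proj_directions[OF assms(1)]) (auto simp: projections_def subspace_scale)
  moreover have "a \<bullet> (D *v x) = op_norm N P"
    using assms(4) px \<open>p \<noteq> 0\<close> by (simp add: D_def outer_prod_mult_vec norming_pairs_def)
  ultimately show ?thesis by blast
qed

lemma norming_pairs_estimate: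
  assumes P: "P \<in> projections Y"
    and xa1: "(x1, a1) \<in> norming_pairs N P" and xa2: "(x2, a2) \<in> norming_pairs N P"
    and Y: "x2 - \<kappa> *\<^sub>R x1 \<in> Y" "\<And>u. u \<in> Y \<Longrightarrow> a2 \<bullet> u = \<nu> * (a1 \<bullet> u)"
  shows "op_norm N P * (1 - \<kappa> * \<nu>) \<le> 1 + \<bar>\<kappa>\<bar>"
proof -
  let ?y = "x2 - \<kappa> *\<^sub>R x1"
  have "a2 \<bullet> (P *v x1) = \<nu> * op_norm N P"
    using P xa1 Y(2)[of "P *v x1"] by (simp add: projections_def norming_pairs_def)
  then have "op_norm N P * (1 - \<kappa> * \<nu>) = a2 \<bullet> (P *v ?y)"
    using xa2 by (simp add: norming_pairs_def matrix_vector_mult_diff_distrib matrix_vector_mult_scaleR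
        inner_diff_right algebra_simps)
  also have "\<dots> = a2 \<bullet> ?y" using P Y(1) by (simp add: projections_def)
  also have "\<dots> \<le> N ?y" using xa2 by (simp add: norming_pairs_def dual_unit_ball_def)
  also have "\<dots> \<le> N x2 + \<bar>\<kappa>\<bar> * N x1"
    using is_norm_diff_le[OF N, of x2 "\<kappa> *\<^sub>R x1"] by (simp add: is_norm_scaleR[OF N])
  also have "\<dots> \<le> 1 + \<bar>\<kappa>\<bar>"
    using xa1 xa2 by (intro add_mono mult_left_le) (auto simp: norming_pairs_def)
  finally show ?thesis .
qed

text \<open>Tested on the rank-one directions \<open>outer_prod u r\<close>, the relation forces the components of \<open>x1, x2\<close>
  orthogonal to \<open>Y\<close>, and the restrictions of \<open>a1, a2\<close> to \<open>Y\<close>, to be proportional.\<close>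
lemma proportional_norming_pairs:
  assumes Y: "subspace Y" and P: "P \<in> projections Y" and pos: "0 < op_norm N P"
    and xa1: "(x1, a1) \<in> norming_pairs N P" and xa2: "(x2, a2) \<in> norming_pairs N P"
    and "x1 \<notin> Y" "\<mu> \<noteq> 0"
    and rel: "\<And>D. D \<in> proj_directions Y \<Longrightarrow> a2 \<bullet> (D *v x2) = \<mu> * (a1 \<bullet> (D *v x1))"
  shows "\<exists>\<kappa> \<nu>. x2 - \<kappa> *\<^sub>R x1 \<in> Y \<and> (\<forall>u\<in>Y. a2 \<bullet> u = \<nu> * (a1 \<bullet> u)) \<and> \<kappa> * \<nu> = \<mu>"
proof -
  let ?l = "op_norm N P"
  have rank_one: "(r \<bullet> x2) * (a2 \<bullet> u) = \<mu> * ((r \<bullet> x1) * (a1 \<bullet> u))"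
    if "u \<in> Y" "r \<in> orthogonal_complement Y" for u r
    using rel[OF outer_prod_in_proj_directions[OF Y that]] by (simp add: outer_prod_mult_vec)
  obtain p where p: "p \<in> orthogonal_complement Y" "x1 - p \<in> Y"
    using orthogonal_decomposition[OF Y] .
  have "p \<bullet> (x1 - p) = 0" using p by (simp add: orthogonal_complement_def)
  moreover have "p \<noteq> 0" using p(2) \<open>x1 \<notin> Y\<close> by auto
  ultimately have px1: "p \<bullet> x1 \<noteq> 0" by (simp add: inner_diff_right)
  have u1: "P *v x1 \<in> Y" "a1 \<bullet> (P *v x1) = ?l" using P xa1 by (auto simp: projections_def norming_pairs_def)
  define c where "c = a2 \<bullet> (P *v x1)"
  have "(p \<bullet> x2) * c = \<mu> * (p \<bullet> x1) * ?l" using rank_one[OF u1(1) p(1)] u1(2) by (simp add: c_def)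
  then have "c \<noteq> 0" using \<open>\<mu> \<noteq> 0\<close> px1 pos by auto
  define \<kappa> where "\<kappa> = \<mu> * ?l / c"
  have \<kappa>: "r \<bullet> x2 = \<kappa> * (r \<bullet> x1)" if "r \<in> orthogonal_complement Y" for r
    using rank_one[OF u1(1) that] u1(2) \<open>c \<noteq> 0\<close> by (simp add: \<kappa>_def c_def field_simps)
  have "x2 - \<kappa> *\<^sub>R x1 \<in> Y"
    using \<kappa> by (intro mem_subspace_if_orthogonal_complement[OF Y]) (simp add: inner_diff_right)
  moreover have "\<kappa> \<noteq> 0" using \<open>\<mu> \<noteq> 0\<close> pos \<open>c \<noteq> 0\<close> by (simp add: \<kappa>_def)
  moreover have "a2 \<bullet> u = \<mu> / \<kappa> * (a1 \<bullet> u)" if "u \<in> Y" for u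
    using rank_one[OF that p(1)] \<kappa>[OF p(1)] px1 \<open>\<kappa> \<noteq> 0\<close> by (simp add: field_simps)
  ultimately show ?thesis by (intro exI[of _ \<kappa>] exI[of _ "\<mu> / \<kappa>"]) auto
qed

text \<open>The estimate, applied to the two pairs in both orders, yields \<open>op_norm N P \<le> 1\<close>.\<close>
lemma no_opposite_norming_pairs:
  assumes Y: "subspace Y" and P: "P \<in> projections Y" and gt1: "1 < op_norm N P"
    and xa1: "(x1, a1) \<in> norming_pairs N P" and xa2: "(x2, a2) \<in> norming_pairs N P"
    and "\<mu> \<le> 0"
    and rel: "\<And>D. D \<in> proj_directions Y \<Longrightarrow> a2 \<bullet> (D *v x2) = \<mu> * (a1 \<bullet> (D *v x1))"
  shows False
proof -
  obtain D where D: "D \<in> proj_directions Y" "a2 \<bullet> (D *v x2) = op_norm N P"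
    using exists_proj_direction_attaining[OF Y P gt1 xa2] by blast
  have "\<mu> \<noteq> 0" using rel[OF D(1)] D(2) gt1 by auto
  with \<open>\<mu> \<le> 0\<close> have "\<mu> < 0" by simp
  obtain \<kappa> \<nu> where \<kappa>\<nu>: "x2 - \<kappa> *\<^sub>R x1 \<in> Y" "\<And>u. u \<in> Y \<Longrightarrow> a2 \<bullet> u = \<nu> * (a1 \<bullet> u)" "\<kappa> * \<nu> = \<mu>"
    using proportional_norming_pairs[OF Y P _ xa1 xa2 norming_point_notin_subspace[OF P gt1 xa1] _ rel]
      gt1 \<open>\<mu> < 0\<close> by force
  have "\<kappa> \<noteq> 0" "\<nu> \<noteq> 0" using \<kappa>\<nu>(3) \<open>\<mu> < 0\<close> by auto
  have "x1 - (1 / \<kappa>) *\<^sub>R x2 = - (1 / \<kappa>) *\<^sub>R (x2 - \<kappa> *\<^sub>R x1)"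
    using \<open>\<kappa> \<noteq> 0\<close> by (simp add: algebra_simps)
  then have "x1 - (1 / \<kappa>) *\<^sub>R x2 \<in> Y" using \<kappa>\<nu>(1) Y by (simp add: subspace_neg subspace_scale)
  moreover have "a1 \<bullet> u = (1 / \<nu>) * (a2 \<bullet> u)" if "u \<in> Y" for u
    using \<kappa>\<nu>(2)[OF that] \<open>\<nu> \<noteq> 0\<close> by simp
  ultimately have "op_norm N P * (1 - 1 / \<kappa> * (1 / \<nu>)) \<le> 1 + \<bar>1 / \<kappa>\<bar>"
    by (intro norming_pairs_estimate[OF P xa2 xa1]) auto
  moreover have "op_norm N P * (1 - \<kappa> * \<nu>) \<le> 1 + \<bar>\<kappa>\<bar>"
    by (rule norming_pairs_estimate[OF P xa1 xa2 \<kappa>\<nu>(1,2)])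
  ultimately have "op_norm N P \<le> 1"
    using \<kappa>\<nu>(3) \<open>\<mu> < 0\<close> \<open>\<kappa> \<noteq> 0\<close>
    by (intro reciprocal_bounds_imp_le_1[of "- \<mu>" "\<bar>\<kappa>\<bar>"]) (auto simp: abs_mult)
  with gt1 show False by simp
qed

end

section \<open>Upper bounds\<close>

lemma linear_eq_at_rel_interior_max:
  fixes M :: "'a::euclidean_space set" and f :: "'a \<Rightarrow> real"
  assumes "convex M" "linear f" "z \<in> rel_interior M" "\<And>y. y \<in> M \<Longrightarrow> f y \<le> f z" "x \<in> M"
  shows "f x = f z"
proof -
  obtain e where e: "e > 1" "(1 - e) *\<^sub>R x + e *\<^sub>R z \<in> M"
    using convex_rel_interior_if2[OF assms(1,3)] hull_inc[OF assms(5)] by blast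
  have "(1 - e) * f x + e * f z \<le> f z"
    using assms(4)[OF e(2)] by (simp add: linear_add[OF assms(2)] linear_scale[OF assms(2)])
  then have "(1 - e) * (f x - f z) \<le> 0" by (simp add: algebra_simps)
  with e(1) have "f z \<le> f x" by (simp add: mult_le_0_iff)
  with assms(4)[OF assms(5)] show ?thesis by simp
qed

lemma proportional_if_vanish_on_hyperplane:
  fixes f g :: "'a::euclidean_space \<Rightarrow> real"
  assumes "subspace V" "S \<subseteq> V" "dim V \<le> dim S + 1" "linear f" "linear g"
    and "\<And>s. s \<in> S \<Longrightarrow> f s = 0" "\<And>s. s \<in> S \<Longrightarrow> g s = 0"
    and "v0 \<in> V" "v \<in> V"
  shows "f v * g v0 = g v * f v0"
proof -
  have span0: "f w = 0" "g w = 0" if "w \<in> span S" for w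
    using that assms(4-7) by (auto intro: linear_eq_0_on_span)
  show ?thesis
  proof (cases "v0 \<in> span S")
    case True
    then show ?thesis using span0 by simp
  next
    case False
    then have "dim (insert v0 S) = dim S + 1" by (simp add: dim_insert)
    moreover have "insert v0 S \<subseteq> V" using assms(2,8) by blast
    ultimately have "span (insert v0 S) = span V"
      using assms(3) by (intro dim_eq_span) auto
    then have "v \<in> span (insert v0 S)" using assms(1,9) span_eq_iff by blast
    then obtain t where t: "v - t *\<^sub>R v0 \<in> span S" using span_breakdown_eq by blast
    have "f v = t * f v0" "g v = t * g v0"
      using span0[OF t] by (simp_all add: linear_diff[OF assms(4)] linear_diff[OF assms(5)]
          linear_scale[OF assms(4)] linear_scale[OF assms(5)])
    then show ?thesis by simp
  qed
qed

lemma norming_functional_const_on_min_projections: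
  assumes N: "is_norm N" and Y: "subspace Y" and P0: "P0 \<in> rel_interior (min_projections N Y)"
    and xa: "(x, a) \<in> norming_pairs N P0" and Q: "Q \<in> min_projections N Y"
  shows "a \<bullet> (Q *v x) = a \<bullet> (P0 *v x)"
proof (rule linear_eq_at_rel_interior_max[OF convex_min_projections[OF N Y] linear_inner_mult_vec P0 _ Q])
  fix R assume "R \<in> min_projections N Y"
  moreover have "P0 \<in> min_projections N Y" using P0 rel_interior_subset by blast
  ultimately show "a \<bullet> (R *v x) \<le> a \<bullet> (P0 *v x)"
    using inner_mult_vec_le_op_norm[OF N, of x a R] xa by (simp add: norming_pairs_def min_projections_def)
qed

lemma exists_norming_pair_against_direction:
  assumes N: "is_norm N" and Y: "subspace Y" and P0: "P0 \<in> min_projections N Y"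
    and D: "D \<in> proj_directions Y"
  shows "\<exists>x a. (x, a) \<in> norming_pairs N P0 \<and> a \<bullet> (D *v x) \<le> 0"
proof (rule exists_norming_pair_nonpos[OF N])
  fix s :: real
  have "P0 + (- s) *\<^sub>R D \<in> projections Y"
    using P0 D subspace_proj_directions[OF Y]
    by (intro projections_add_proj_directions[OF Y]) (simp_all add: min_projections_def subspace_neg subspace_scale)
  then show "op_norm N P0 \<le> op_norm N (P0 - s *\<^sub>R D)"
    using rel_proj_const_le[OF N] P0 by (simp add: min_projections_def)
qed

theorem aff_dim_min_projections_le_minus_2:
  fixes N :: "real^'n \<Rightarrow> real"
  assumes N: "is_norm N" and Y: "subspace Y"
    and ne: "min_projections N Y \<noteq> {}" and gt1: "1 < rel_proj_const N Y"
  shows "aff_dim (min_projections N Y) \<le> int (dim (proj_directions Y)) - 2"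
proof (rule ccontr)
  let ?M = "min_projections N Y" and ?l = "rel_proj_const N Y"
  assume "\<not> ?thesis"
  then have big: "int (dim (proj_directions Y)) \<le> aff_dim ?M + 1" by simp
  obtain P0 where P0: "P0 \<in> rel_interior ?M"
    using rel_interior_eq_empty[OF convex_min_projections[OF N Y]] ne by blast
  then have P0M: "P0 \<in> ?M" using rel_interior_subset by blast
  then have P0p: "P0 \<in> projections Y" and l: "op_norm N P0 = ?l" by (simp_all add: min_projections_def)
  have gt1': "1 < op_norm N P0" using gt1 l by simp
  define S where "S = (\<lambda>Q. Q - P0) ` ?M"
  have SD: "S \<subseteq> proj_directions Y"
    using projections_diff_in_proj_directions[OF Y P0p] by (auto simp: S_def min_projections_def)
  have dimS: "dim (proj_directions Y) \<le> dim S + 1"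
    using big aff_dim_eq_dim_subtract[OF hull_inc[OF P0M]] by (simp add: S_def)
  have vanish: "a \<bullet> (D *v x) = 0" if "(x, a) \<in> norming_pairs N P0" "D \<in> S" for x a D
    using that norming_functional_const_on_min_projections[OF N Y P0 that(1)]
    by (auto simp: S_def matrix_vector_mult_diff_rdistrib inner_diff_right)
  obtain x1 a1 where xa1: "(x1, a1) \<in> norming_pairs N P0" using norming_pairs_nonempty[OF N] by blast
  obtain Dt where Dt: "Dt \<in> proj_directions Y" "a1 \<bullet> (Dt *v x1) = ?l"
    using exists_proj_direction_attaining[OF N Y P0p gt1' xa1] l by auto
  obtain x2 a2 where xa2: "(x2, a2) \<in> norming_pairs N P0" and nonpos: "a2 \<bullet> (Dt *v x2) \<le> 0"
    using exists_norming_pair_against_direction[OF N Y P0M Dt(1)] by blast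
  have proportional: "a2 \<bullet> (D *v x2) * ?l = a1 \<bullet> (D *v x1) * (a2 \<bullet> (Dt *v x2))"
    if "D \<in> proj_directions Y" for D
    using proportional_if_vanish_on_hyperplane[OF subspace_proj_directions[OF Y] SD dimS
        linear_inner_mult_vec linear_inner_mult_vec vanish[OF xa2] vanish[OF xa1] Dt(1) that] Dt(2)
    by simp
  have "a2 \<bullet> (Dt *v x2) / ?l \<le> 0" using nonpos gt1 by (simp add: divide_nonpos_pos)
  moreover have "a2 \<bullet> (D *v x2) = a2 \<bullet> (Dt *v x2) / ?l * (a1 \<bullet> (D *v x1))"
    if "D \<in> proj_directions Y" for D
    using proportional[OF that] gt1 by (simp add: field_simps)
  ultimately show False
    using no_opposite_norming_pairs[OF N Y P0p gt1' xa1 xa2] by blast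
qed

theorem aff_dim_min_projections_le_dim_codim:
  fixes Y :: "(real^'n) set"
  assumes "subspace Y"
  shows "aff_dim (min_projections N Y) \<le> int (dim Y) * (int CARD('n) - int (dim Y))"
  using aff_dim_min_projections_le[OF assms, of N] dim_proj_directions_le[OF assms] by linarith

theorem aff_dim_min_projections_le_dim_codim_minus_2:
  fixes N :: "real^'n \<Rightarrow> real"
  assumes "is_norm N" "subspace Y" "0 < dim Y" "dim Y < CARD('n)" "1 < rel_proj_const N Y"
  shows "aff_dim (min_projections N Y) \<le> int (dim Y) * (int CARD('n) - int (dim Y)) - 2"
proof (cases "min_projections N Y = {}")
  case True
  have "1 \<le> int (dim Y)" "1 \<le> int CARD('n) - int (dim Y)" using assms(3,4) by linarith+
  then have "1 * 1 \<le> int (dim Y) * (int CARD('n) - int (dim Y))" by (intro mult_mono) auto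
  with True show ?thesis by simp
next
  case False
  then show ?thesis
    using aff_dim_min_projections_le_minus_2[OF assms(1,2) False assms(5)] dim_proj_directions_le[OF assms(2)]
    by linarith
qed

section \<open>Examples of equality\<close>

definition coord_subspace :: "'n set \<Rightarrow> (real^'n) set" where
  "coord_subspace S = {x. \<forall>i. i \<notin> S \<longrightarrow> x$i = 0}"

definition supported_matrices :: "('m \<times> 'n) set \<Rightarrow> (real^'n^'m) set" where
  "supported_matrices R = {D. \<forall>i j. (i, j) \<notin> R \<longrightarrow> D$i$j = 0}"

lemma subspace_coord_subspace: "subspace (coord_subspace S)"
  unfolding subspace_def coord_subspace_def by auto

lemma subspace_supported_matrices: "subspace (supported_matrices R)"
  unfolding subspace_def supported_matrices_def by auto

lemma dim_coord_subspace: "dim (coord_subspace S) = card (S :: 'n::finite set)"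
proof -
  define d where "d = (\<lambda>i. axis i (1::real)) ` S"
  have dB: "d \<subseteq> Basis" unfolding d_def Basis_vec_def by auto
  have "coord_subspace S = {x. \<forall>b\<in>Basis. b \<notin> d \<longrightarrow> x \<bullet> b = 0}"
    unfolding d_def Basis_vec_def coord_subspace_def by (auto simp: inner_axis axis_eq_axis)
  moreover have "card d = card S" unfolding d_def
    by (rule card_image) (auto simp: inj_on_def axis_eq_axis)
  ultimately show ?thesis using dim_substandard[OF dB] by simp
qed

lemma dim_supported_matrices: "dim (supported_matrices R) = card (R :: ('m::finite \<times> 'n::finite) set)"
proof -
  define d where "d = (\<lambda>(i, j). axis i (axis j (1::real))) ` R"
  have dB: "d \<subseteq> Basis" unfolding d_def Basis_vec_def by auto
  have "axis i (axis j (1::real)) \<in> d \<longleftrightarrow> (i, j) \<in> R" for i j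
    unfolding d_def by (force simp: axis_eq_axis)
  then have "supported_matrices R = {x. \<forall>b\<in>Basis. b \<notin> d \<longrightarrow> x \<bullet> b = 0}"
    unfolding Basis_vec_def supported_matrices_def by (auto simp: inner_axis)
  moreover have "card d = card R" unfolding d_def
    by (rule card_image) (auto simp: inj_on_def axis_eq_axis)
  ultimately show ?thesis using dim_substandard[OF dB] by simp
qed

lemma abs_matrix_entry_le_norm: "\<bar>D$i$j\<bar> \<le> norm (D :: real^'n^'m)"
  using component_le_norm_cart[of "D$i" j] Finite_Cartesian_Product.norm_nth_le[of D i] by simp

lemma projections_coord_subspaceI:
  fixes P :: "real^'n^'n"
  assumes "\<And>i j. i \<notin> S \<Longrightarrow> P$i$j = 0" "\<And>i j. j \<in> S \<Longrightarrow> P$i$j = (if i = j then 1 else 0)"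
  shows "P \<in> projections (coord_subspace S)"
  unfolding projections_def coord_subspace_def
proof (intro CollectI conjI allI ballI impI)
  fix x i assume "i \<notin> S"
  then show "(P *v x) $ i = 0" using assms(1) by (simp add: matrix_vector_mult_def)
next
  fix y :: "real^'n" assume y: "y \<in> {x. \<forall>i. i \<notin> S \<longrightarrow> x$i = 0}"
  have "P $ i $ j * y $ j = (if j = i then y $ i else 0)" for i j
    using assms(2)[of j i] y by (cases "j \<in> S") auto
  then show "P *v y = y" by (simp add: vec_eq_iff matrix_vector_mult_def)
qed

lemma one_le_op_norm_projection:
  assumes "is_norm N" "P \<in> projections Y" "y \<in> Y" "y \<noteq> 0"
  shows "1 \<le> op_norm N P"
proof -
  have "N (y /\<^sub>R N y) = 1" "P *v (y /\<^sub>R N y) = y /\<^sub>R N y"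
    using assms is_norm_pos[OF assms(1,4)] subspace_scale
    by (auto simp: is_norm_scaleR[OF assms(1)] projections_def matrix_vector_mult_scaleR)
  then show ?thesis using op_norm_upper[OF assms(1), of "y /\<^sub>R N y" P] by simp
qed

lemma min_projections_ball_bounds:
  assumes N: "is_norm N" and C: "subspace C" "0 < r"
    and proj: "\<And>D. D \<in> C \<Longrightarrow> norm D < r \<Longrightarrow> P + D \<in> projections Y"
    and upper: "\<And>D. D \<in> C \<Longrightarrow> norm D < r \<Longrightarrow> op_norm N (P + D) \<le> c"
    and lower: "\<And>Q. Q \<in> projections Y \<Longrightarrow> c \<le> op_norm N Q"
  shows "rel_proj_const N Y = c" and "int (dim C) \<le> aff_dim (min_projections N Y)"
proof -
  have P: "P \<in> projections Y" "op_norm N P \<le> c" using proj[of 0] upper[of 0] C by (simp_all add: subspace_0)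
  show lambda: "rel_proj_const N Y = c"
    using rel_proj_const_le[OF N P(1)] rel_proj_const_ge[OF P(1) lower] P(2) by simp
  have "(\<lambda>D. P + D) ` (C \<inter> ball 0 r) \<subseteq> min_projections N Y"
    using proj upper lower lambda by (fastforce simp: min_projections_def intro: antisym)
  then have "aff_dim ((\<lambda>D. P + D) ` (C \<inter> ball 0 r)) \<le> aff_dim (min_projections N Y)"
    by (rule aff_dim_subset)
  moreover have "aff_dim (C \<inter> ball 0 r) = aff_dim C"
    using C subspace_0[OF C(1)] by (intro aff_dim_convex_Int_open) (auto simp: subspace_imp_convex)
  ultimately show "int (dim C) \<le> aff_dim (min_projections N Y)"
    using aff_dim_translation_eq[of P] aff_dim_subspace[OF C(1)] by simp
qed

definition l1_norm :: "real^'n \<Rightarrow> real" where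
  "l1_norm x = (\<Sum>i\<in>UNIV. \<bar>x$i\<bar>)"

lemma is_norm_l1_norm: "is_norm l1_norm"
  unfolding is_norm_def l1_norm_def
  by (auto simp: sum_nonneg_eq_0_iff vec_eq_iff abs_mult sum_distrib_left
      simp flip: sum.distrib intro: sum_mono abs_triangle_ineq)

lemma l1_norm_mult_vec_le:
  assumes "\<And>j. (\<Sum>i\<in>UNIV. \<bar>P$i$j\<bar>) \<le> 1"
  shows "l1_norm (P *v x) \<le> l1_norm x"
proof -
  have "l1_norm (P *v x) \<le> (\<Sum>i\<in>UNIV. \<Sum>j\<in>UNIV. \<bar>P$i$j\<bar> * \<bar>x$j\<bar>)"
    unfolding l1_norm_def matrix_vector_mult_def
    by (auto intro!: sum_mono order_trans[OF sum_abs] simp: abs_mult)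
  also have "\<dots> = (\<Sum>j\<in>UNIV. (\<Sum>i\<in>UNIV. \<bar>P$i$j\<bar>) * \<bar>x$j\<bar>)"
    by (subst sum.swap) (simp add: sum_distrib_right)
  also have "\<dots> \<le> l1_norm x"
    unfolding l1_norm_def using assms by (intro sum_mono) (simp add: mult_left_le_one_le)
  finally show ?thesis .
qed

definition coord_proj :: "'n set \<Rightarrow> real^'n^'n" where
  "coord_proj S = (\<chi> i j. if i = j \<and> i \<in> S then 1 else 0)"

lemma coord_proj_mult_vec_nth: "(coord_proj S *v x)$i = (if i \<in> S then x$i else 0)"
  by (cases "i \<in> S") (simp_all add: coord_proj_def matrix_vector_mult_def mult_delta_left)

lemma aff_dim_min_projections_l1_norm:
  fixes S :: "'n::finite set"
  assumes "S \<noteq> {}"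
  shows "aff_dim (min_projections l1_norm (coord_subspace S)) = int (card S) * (int CARD('n) - int (card S))"
proof -
  let ?C = "supported_matrices (S \<times> - S) :: (real^'n^'n) set"
  have proj: "coord_proj S + D \<in> projections (coord_subspace S)" if "D \<in> ?C" for D
    using that by (intro projections_coord_subspaceI) (auto simp: supported_matrices_def coord_proj_def)
  have upper: "op_norm l1_norm (coord_proj S + D) \<le> 1" if "D \<in> ?C" "norm D < 1 / CARD('n)" for D
  proof -
    have "(\<Sum>i\<in>UNIV. \<bar>(coord_proj S + D)$i$j\<bar>) \<le> 1" for j
    proof (cases "j \<in> S")
      case True
      then have "(coord_proj S + D)$i$j = (if i = j then 1 else 0)" for i
        using that(1) by (auto simp: supported_matrices_def coord_proj_def)
      then show ?thesis by simp
    next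
      case False
      have "\<bar>D$i$j\<bar> \<le> 1 / CARD('n)" for i using abs_matrix_entry_le_norm[of D i j] that(2) by linarith
      then have "(\<Sum>i\<in>UNIV. \<bar>(coord_proj S + D)$i$j\<bar>) \<le> (\<Sum>i\<in>(UNIV::'n set). 1 / CARD('n))"
        using False by (intro sum_mono) (auto simp: coord_proj_def)
      then show ?thesis by simp
    qed
    then have "l1_norm ((coord_proj S + D) *v x) \<le> l1_norm x" for x by (rule l1_norm_mult_vec_le)
    then show ?thesis by (intro op_norm_least[OF is_norm_l1_norm]) (rule order_trans)
  qed
  obtain s where "s \<in> S" using assms by blast
  then have "axis s 1 \<in> coord_subspace S" by (simp add: coord_subspace_def axis_def)
  then have lower: "1 \<le> op_norm l1_norm Q" if "Q \<in> projections (coord_subspace S)" for Q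
    using one_le_op_norm_projection[OF is_norm_l1_norm that] by (simp add: axis_eq_0_iff)
  have "card (- S) = CARD('n) - card S" by (simp add: Compl_eq_Diff_UNIV card_Diff_subset)
  moreover have "card S \<le> CARD('n)" by (simp add: card_mono)
  ultimately have "int (dim ?C) = int (card S) * (int CARD('n) - int (card S))"
    by (simp add: dim_supported_matrices card_cartesian_product of_nat_diff)
  then have "int (card S) * (int CARD('n) - int (card S)) \<le> aff_dim (min_projections l1_norm (coord_subspace S))"
    using min_projections_ball_bounds(2)[where r = "1 / CARD('n)", OF is_norm_l1_norm
        subspace_supported_matrices[of "S \<times> - S"] _ proj upper lower] by simp
  moreover have "aff_dim (min_projections l1_norm (coord_subspace S)) \<le> int (card S) * (int CARD('n) - int (card S))"
    using aff_dim_min_projections_le_dim_codim[OF subspace_coord_subspace] by (simp add: dim_coord_subspace)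
  ultimately show ?thesis by linarith
qed

lemma coefficient_bounds:
  fixes a b t m :: real
  assumes "\<bar>a + t\<bar> \<le> m" "\<bar>b\<bar> \<le> m" "\<bar>a + b\<bar> \<le> m"
  shows "\<bar>a + 2/3 * t\<bar> \<le> 4/3 * m" "\<bar>b - 1/3 * t\<bar> \<le> 4/3 * m" "\<bar>a + b + 1/3 * t\<bar> \<le> 4/3 * m"
    "\<bar>t\<bar> \<le> 3 * m"
  using assms unfolding abs_le_iff by (intro conjI; linarith)+

lemma sum_abs_triangle:
  fixes x y :: "real^'n"
  shows "(\<Sum>j\<in>J. \<bar>(x + y)$j\<bar>) \<le> (\<Sum>j\<in>J. \<bar>x$j\<bar>) + (\<Sum>j\<in>J. \<bar>y$j\<bar>)"
  by (simp add: sum.distrib[symmetric] sum_mono abs_triangle_ineq)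

text \<open>With \<open>e1, e2, e3\<close> the unit vectors at \<open>i1, i2, i3\<close>, every projection onto the coordinate subspace
  of \<open>S\<close> has \<open>nrm\<close>-norm at least 4/3 (test it on \<open>2 e1 - e2 - e3\<close>, \<open>e2 - e3\<close> and \<open>- e2 - e3\<close>), while
  \<open>P0\<close> keeps norm 4/3 under all small perturbations supported on \<open>R\<close>, a set of \<open>k (n - k) - 2\<close> entries
  for \<open>k = card S\<close>.\<close>
locale sharpness_example =
  fixes S :: "'n::finite set" and i1 i2 i3 :: 'n
  assumes i1: "i1 \<in> S" and i2: "i2 \<in> S" and i12: "i1 \<noteq> i2" and i3: "i3 \<notin> S"
begin

definition A :: "'n set" where "A = S - {i1, i2}"

definition B :: "'n set" where "B = - insert i3 S"

definition core :: "real^'n \<Rightarrow> real" where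
  "core x = max (max \<bar>x$i1 + x$i3\<bar> \<bar>x$i2\<bar>) (max \<bar>x$i1 + x$i2\<bar> (\<Sum>j\<in>A. \<bar>x$j\<bar>))"

definition nrm :: "real^'n \<Rightarrow> real" where
  "nrm x = core x + (\<Sum>j\<in>B. \<bar>x$j\<bar>)"

definition P0 :: "real^'n^'n" where
  "P0 = coord_proj S + outer_prod ((2/3) *\<^sub>R axis i1 1 - (1/3) *\<^sub>R axis i2 1) (axis i3 1)"

definition R :: "('n \<times> 'n) set" where "R = S \<times> B \<union> A \<times> {i3}"

lemma index_facts: "i1 \<notin> A" "i2 \<notin> A" "i3 \<notin> A" "i1 \<notin> B" "i2 \<notin> B" "i3 \<notin> B" "i3 \<noteq> i1" "i3 \<noteq> i2"
  "A \<subseteq> S" "j \<in> B \<longleftrightarrow> j \<noteq> i3 \<and> j \<notin> S" "j \<in> S \<longleftrightarrow> j = i1 \<or> j = i2 \<or> j \<in> A"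
  using i1 i2 i3 by (auto simp: A_def B_def)

lemma core_ge: "\<bar>x$i1 + x$i3\<bar> \<le> core x" "\<bar>x$i2\<bar> \<le> core x" "\<bar>x$i1 + x$i2\<bar> \<le> core x"
  "(\<Sum>j\<in>A. \<bar>x$j\<bar>) \<le> core x"
  unfolding core_def by auto

lemma core_le_nrm: "core x \<le> nrm x"
  unfolding nrm_def by (simp add: sum_nonneg)

lemma core_scaleR: "core (c *\<^sub>R x) = \<bar>c\<bar> * core x"
proof -
  have "\<bar>c * x$i + c * x$j\<bar> = \<bar>c\<bar> * \<bar>x$i + x$j\<bar>" for i j
    by (simp add: abs_mult flip: distrib_left)
  then show ?thesis by (simp add: core_def abs_mult sum_distrib_left max_mult_distrib_left)
qed

lemma core_triangle: "core (x + y) \<le> core x + core y"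
proof -
  have pair: "\<bar>(x + y)$i + (x + y)$j\<bar> \<le> \<bar>x$i + x$j\<bar> + \<bar>y$i + y$j\<bar>" for i j
    using abs_triangle_ineq[of "x$i + x$j" "y$i + y$j"] by (simp add: algebra_simps)
  have "\<bar>(x + y)$i1 + (x + y)$i3\<bar> \<le> core x + core y"
    using pair[of i1 i3] core_ge(1)[of x] core_ge(1)[of y] by linarith
  moreover have "\<bar>(x + y)$i2\<bar> \<le> core x + core y"
    using abs_triangle_ineq[of "x$i2" "y$i2"] core_ge(2)[of x] core_ge(2)[of y] by simp
  moreover have "\<bar>(x + y)$i1 + (x + y)$i2\<bar> \<le> core x + core y"
    using pair[of i1 i2] core_ge(3)[of x] core_ge(3)[of y] by linarith
  moreover have "(\<Sum>j\<in>A. \<bar>(x + y)$j\<bar>) \<le> core x + core y"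
    using sum_abs_triangle[where J = A and x = x and y = y] core_ge(4)[of x] core_ge(4)[of y] by linarith
  ultimately show ?thesis unfolding core_def[of "x + y"] by (intro max.boundedI)
qed

lemma is_norm_nrm: "is_norm nrm"
  unfolding is_norm_def
proof (intro conjI allI)
  fix x :: "real^'n"
  show "nrm x = 0 \<longleftrightarrow> x = 0"
  proof
    assume "nrm x = 0"
    moreover have "0 \<le> core x" "0 \<le> (\<Sum>j\<in>B. \<bar>x$j\<bar>)" by (auto simp: core_def sum_nonneg)
    ultimately have "core x = 0" "(\<Sum>j\<in>B. \<bar>x$j\<bar>) = 0" unfolding nrm_def by linarith+
    moreover have "(\<Sum>j\<in>A. \<bar>x$j\<bar>) = 0"
      using core_ge(4)[of x] \<open>core x = 0\<close> by (simp add: antisym sum_nonneg)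
    ultimately have "x$i1 + x$i3 = 0" "x$i2 = 0" "x$i1 + x$i2 = 0" "\<forall>j\<in>A. x$j = 0" "\<forall>j\<in>B. x$j = 0"
      using core_ge[of x] by (auto simp: sum_nonneg_eq_0_iff)
    then show "x = 0" using index_facts(10,11) by (auto simp: vec_eq_iff)
  qed (simp add: nrm_def core_def)
next
  fix c and x :: "real^'n"
  show "nrm (c *\<^sub>R x) = \<bar>c\<bar> * nrm x"
    by (simp add: nrm_def core_scaleR abs_mult sum_distrib_left distrib_left)
next
  fix x y :: "real^'n"
  show "nrm (x + y) \<le> nrm x + nrm y"
    using core_triangle[of x y] sum_abs_triangle[where J = B and x = x and y = y] by (simp add: nrm_def)
qed

lemma P0_mult_vec_nth:
  "(P0 *v x)$i = (if i \<in> S then x$i else 0) + x$i3 * ((if i = i1 then 2/3 else 0) - (if i = i2 then 1/3 else 0))"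
  using i12 by (simp add: P0_def matrix_vector_mult_add_rdistrib outer_prod_mult_vec inner_axis'
      coord_proj_mult_vec_nth) (simp add: axis_def)

lemma P0_plus_projection:
  assumes "D \<in> supported_matrices R"
  shows "P0 + D \<in> projections (coord_subspace S)"
proof (rule projections_coord_subspaceI)
  fix i j
  have "P0$i$j = (if i = j \<and> i \<in> S then 1 else 0) + (if j = i3 then (if i = i1 then 2/3 else if i = i2 then - 1/3 else 0) else 0)"
    using i12 by (simp add: P0_def coord_proj_def outer_prod_def axis_def)
  then show "i \<notin> S \<Longrightarrow> (P0 + D)$i$j = 0" "j \<in> S \<Longrightarrow> (P0 + D)$i$j = (if i = j then 1 else 0)"
    using assms i1 i2 i3 index_facts by (auto simp: supported_matrices_def R_def)
qed

lemma perturbation_nth_bound: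
  assumes D: "D \<in> supported_matrices R" and \<delta>: "\<And>i j. \<bar>D$i$j\<bar> \<le> \<delta>"
  shows "i \<notin> S \<Longrightarrow> (D *v x)$i = 0"
    and "\<bar>(D *v x)$i\<bar> \<le> \<delta> * (\<Sum>j\<in>B. \<bar>x$j\<bar>) + (if i \<in> A then \<delta> * \<bar>x$i3\<bar> else 0)"
proof -
  have entry: "D$i$j = 0" if "(i, j) \<notin> R" for j using D that by (simp add: supported_matrices_def)
  show "(D *v x)$i = 0" if "i \<notin> S"
  proof -
    have "D$i$j = 0" for j using entry[of j] that index_facts(9) by (auto simp: R_def)
    then show ?thesis by (simp add: matrix_vector_mult_def)
  qed
  have "\<bar>D$i$j * x$j\<bar> \<le> (if j \<in> B then \<delta> * \<bar>x$j\<bar> else 0) + (if i \<in> A \<and> j = i3 then \<delta> * \<bar>x$j\<bar> else 0)" for j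
    using entry[of j] \<delta>[of i j] index_facts
    by (cases "(i, j) \<in> R") (auto simp: R_def abs_mult mult_right_mono)
  then have "\<bar>(D *v x)$i\<bar> \<le> (\<Sum>j\<in>UNIV. (if j \<in> B then \<delta> * \<bar>x$j\<bar> else 0) + (if i \<in> A \<and> j = i3 then \<delta> * \<bar>x$j\<bar> else 0))"
    unfolding matrix_vector_mult_def by (auto intro: order_trans[OF sum_abs] sum_mono)
  also have "\<dots> = \<delta> * (\<Sum>j\<in>B. \<bar>x$j\<bar>) + (if i \<in> A then \<delta> * \<bar>x$i3\<bar> else 0)"
    by (simp add: sum.distrib sum.If_cases sum_distrib_left)
  finally show "\<bar>(D *v x)$i\<bar> \<le> \<delta> * (\<Sum>j\<in>B. \<bar>x$j\<bar>) + (if i \<in> A then \<delta> * \<bar>x$i3\<bar> else 0)" .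
qed

lemma P0_plus_sum_A_le:
  fixes \<delta> :: real
  assumes D: "D \<in> supported_matrices R" and \<delta>: "\<And>i j. \<bar>D$i$j\<bar> \<le> \<delta>" "0 \<le> \<delta>" "real CARD('n) * \<delta> \<le> 1 / 9"
  shows "(\<Sum>j\<in>A. \<bar>((P0 + D) *v x)$j\<bar>) \<le> 4/3 * core x + (\<Sum>j\<in>B. \<bar>x$j\<bar>) / 9"
proof -
  define \<beta> where "\<beta> = (\<Sum>j\<in>B. \<bar>x$j\<bar>)"
  have "real (card A) \<le> CARD('n)" by (simp add: card_mono)
  then have "card A * \<delta> \<le> CARD('n) * \<delta>" using \<delta>(2) by (rule mult_right_mono)
  then have A\<delta>: "card A * \<delta> \<le> 1 / 9" using \<delta>(3) by linarith
  have "(\<Sum>j\<in>A. \<bar>((P0 + D) *v x)$j\<bar>) \<le> (\<Sum>j\<in>A. \<bar>x$j\<bar> + (\<delta> * \<beta> + \<delta> * \<bar>x$i3\<bar>))"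
  proof (rule sum_mono)
    fix j assume "j \<in> A"
    then have "((P0 + D) *v x)$j = x$j + (D *v x)$j"
      using index_facts by (auto simp: matrix_vector_mult_add_rdistrib P0_mult_vec_nth)
    then show "\<bar>((P0 + D) *v x)$j\<bar> \<le> \<bar>x$j\<bar> + (\<delta> * \<beta> + \<delta> * \<bar>x$i3\<bar>)"
      using perturbation_nth_bound(2)[OF D \<delta>(1), of x j] \<open>j \<in> A\<close> by (simp add: \<beta>_def)
  qed
  also have "\<dots> = (\<Sum>j\<in>A. \<bar>x$j\<bar>) + card A * \<delta> * (\<beta> + \<bar>x$i3\<bar>)"
    by (simp add: sum.distrib algebra_simps)
  also have "\<dots> \<le> core x + 1 / 9 * (\<beta> + 3 * core x)"
    using core_ge(4)[of x] A\<delta> coefficient_bounds(4)[OF core_ge(1-3)] \<delta>(2)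
    by (intro add_mono mult_mono) (auto simp: \<beta>_def sum_nonneg)
  finally show ?thesis by (simp add: \<beta>_def field_simps)
qed

lemma nrm_P0_plus_le:
  fixes \<delta> :: real
  assumes D: "D \<in> supported_matrices R" and \<delta>: "\<And>i j. \<bar>D$i$j\<bar> \<le> \<delta>" "0 \<le> \<delta>" "real CARD('n) * \<delta> \<le> 1 / 9"
  shows "nrm ((P0 + D) *v x) \<le> 4/3 * nrm x"
proof -
  define y where "y = (P0 + D) *v x"
  define d where "d = D *v x"
  define m where "m = core x"
  define \<beta> where "\<beta> = (\<Sum>j\<in>B. \<bar>x$j\<bar>)"
  have y: "y$i = (if i \<in> S then x$i else 0) + x$i3 * ((if i = i1 then 2/3 else 0) - (if i = i2 then 1/3 else 0)) + d$i"
    for i by (simp add: y_def d_def matrix_vector_mult_add_rdistrib P0_mult_vec_nth)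
  have d_out: "i \<notin> S \<Longrightarrow> d$i = 0" for i using perturbation_nth_bound(1)[OF D \<delta>(1)] by (simp add: d_def)
  have "0 \<le> \<beta>" by (simp add: \<beta>_def sum_nonneg)
  have "1 * \<delta> \<le> CARD('n) * \<delta>" using \<delta>(2) by (intro mult_right_mono) auto
  then have "\<delta> * \<beta> \<le> 1 / 9 * \<beta>" using \<delta>(3) \<open>0 \<le> \<beta>\<close> by (intro mult_right_mono) auto
  moreover have "\<bar>d$i\<bar> \<le> \<delta> * \<beta>" if "i \<notin> A" for i
    using perturbation_nth_bound(2)[OF D \<delta>(1), of x i] that by (simp add: d_def \<beta>_def)
  ultimately have d12: "\<bar>d$i1\<bar> \<le> \<beta> / 9" "\<bar>d$i2\<bar> \<le> \<beta> / 9"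
    using index_facts(1,2) by fastforce+
  have cb: "\<bar>x$i1 + 2/3 * x$i3\<bar> \<le> 4/3 * m" "\<bar>x$i2 - 1/3 * x$i3\<bar> \<le> 4/3 * m"
    "\<bar>x$i1 + x$i2 + 1/3 * x$i3\<bar> \<le> 4/3 * m"
    using coefficient_bounds[OF core_ge(1-3)] by (simp_all add: m_def)
  have "y$i1 + y$i3 = (x$i1 + 2/3 * x$i3) + d$i1" "y$i2 = (x$i2 - 1/3 * x$i3) + d$i2"
    "y$i1 + y$i2 = (x$i1 + x$i2 + 1/3 * x$i3) + (d$i1 + d$i2)"
    using y[of i1] y[of i2] y[of i3] d_out[of i3] i1 i2 i3 i12 index_facts by (simp_all add: algebra_simps)
  then have t: "\<bar>y$i1 + y$i3\<bar> \<le> \<bar>x$i1 + 2/3 * x$i3\<bar> + \<bar>d$i1\<bar>" "\<bar>y$i2\<bar> \<le> \<bar>x$i2 - 1/3 * x$i3\<bar> + \<bar>d$i2\<bar>"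
    "\<bar>y$i1 + y$i2\<bar> \<le> \<bar>x$i1 + x$i2 + 1/3 * x$i3\<bar> + (\<bar>d$i1\<bar> + \<bar>d$i2\<bar>)"
    by (simp_all only: abs_triangle_ineq order_trans[OF abs_triangle_ineq add_left_mono[OF abs_triangle_ineq]])
  have "\<bar>y$i1 + y$i3\<bar> \<le> 4/3 * m + 4/3 * \<beta>" using t(1) cb(1) d12(1) \<open>0 \<le> \<beta>\<close> by linarith
  moreover have "\<bar>y$i2\<bar> \<le> 4/3 * m + 4/3 * \<beta>" using t(2) cb(2) d12(2) \<open>0 \<le> \<beta>\<close> by linarith
  moreover have "\<bar>y$i1 + y$i2\<bar> \<le> 4/3 * m + 4/3 * \<beta>" using t(3) cb(3) d12 \<open>0 \<le> \<beta>\<close> by linarith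
  moreover have "(\<Sum>j\<in>A. \<bar>y$j\<bar>) \<le> 4/3 * m + 4/3 * \<beta>"
    using P0_plus_sum_A_le[OF D \<delta>, of x] \<open>0 \<le> \<beta>\<close> unfolding y_def m_def \<beta>_def by linarith
  ultimately have "core y \<le> 4/3 * m + 4/3 * \<beta>" unfolding core_def by (intro max.boundedI)
  moreover have "y$j = 0" if "j \<in> B" for j
    using y[of j] d_out[of j] that index_facts(10) i1 i2 by auto
  then have "(\<Sum>j\<in>B. \<bar>y$j\<bar>) = 0" by simp
  ultimately show ?thesis by (simp add: nrm_def m_def \<beta>_def y_def)
qed

lemma nrm_test_vector:
  "nrm (a *\<^sub>R axis i1 1 + b *\<^sub>R axis i2 1 + t *\<^sub>R axis i3 1) = max (max \<bar>a + t\<bar> \<bar>b\<bar>) (max \<bar>a + b\<bar> 0)"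
proof -
  let ?v = "a *\<^sub>R axis i1 1 + b *\<^sub>R axis i2 1 + t *\<^sub>R axis i3 (1::real)"
  have c: "?v$i1 = a" "?v$i2 = b" "?v$i3 = t" "\<And>j. j \<in> A \<union> B \<Longrightarrow> ?v$j = 0"
    using i12 index_facts by (auto simp: axis_def)
  then have "(\<Sum>j\<in>A. \<bar>?v$j\<bar>) = 0" "(\<Sum>j\<in>B. \<bar>?v$j\<bar>) = 0" by simp_all
  then show ?thesis unfolding nrm_def core_def c(1-3) by simp
qed

lemma op_norm_projection_ge:
  assumes P: "P \<in> projections (coord_subspace S)"
  shows "4/3 \<le> op_norm nrm P"
proof -
  define q where "q = P *v axis i3 1"
  have "axis i1 1 \<in> coord_subspace S" "axis i2 1 \<in> coord_subspace S"
    using i1 i2 by (auto simp: coord_subspace_def axis_def)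
  then have Pe: "P *v axis i1 1 = axis i1 1" "P *v axis i2 1 = axis i2 1"
    using P by (simp_all add: projections_def)
  have "q$i3 = 0" using P i3 by (simp add: q_def projections_def coord_subspace_def)
  have img: "P *v (a *\<^sub>R axis i1 1 + b *\<^sub>R axis i2 1 + t *\<^sub>R axis i3 1) = a *\<^sub>R axis i1 1 + b *\<^sub>R axis i2 1 + t *\<^sub>R q"
    for a b t by (simp add: matrix_vector_right_distrib matrix_vector_mult_scaleR Pe q_def)
  have Pv: "(P *v (a *\<^sub>R axis i1 1 + b *\<^sub>R axis i2 1 + t *\<^sub>R axis i3 1))$i1 = a + t * q$i1"
    "(P *v (a *\<^sub>R axis i1 1 + b *\<^sub>R axis i2 1 + t *\<^sub>R axis i3 1))$i2 = b + t * q$i2"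
    "(P *v (a *\<^sub>R axis i1 1 + b *\<^sub>R axis i2 1 + t *\<^sub>R axis i3 1))$i3 = 0" for a b t
    unfolding img using \<open>q$i3 = 0\<close> i12 index_facts by (simp_all add: axis_def)
  have test: "nrm (P *v (a *\<^sub>R axis i1 1 + b *\<^sub>R axis i2 1 + t *\<^sub>R axis i3 1)) \<le> op_norm nrm P"
    if "max (max \<bar>a + t\<bar> \<bar>b\<bar>) (max \<bar>a + b\<bar> 0) \<le> 1" for a b t
    using that by (intro op_norm_upper[OF is_norm_nrm]) (simp add: nrm_test_vector)
  have "2 - q$i1 \<le> op_norm nrm P"
  proof -
    let ?w = "P *v (2 *\<^sub>R axis i1 1 + (-1) *\<^sub>R axis i2 1 + (-1) *\<^sub>R axis i3 1)"
    have "\<bar>?w$i1 + ?w$i3\<bar> \<le> nrm ?w" using core_ge(1) core_le_nrm by (rule order_trans)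
    also have "\<dots> \<le> op_norm nrm P" by (rule test) simp
    finally show ?thesis using Pv[of 2 "-1" "-1"] by (simp add: abs_le_iff)
  qed
  moreover have "1 - q$i2 \<le> op_norm nrm P"
  proof -
    let ?w = "P *v (0 *\<^sub>R axis i1 1 + 1 *\<^sub>R axis i2 1 + (-1) *\<^sub>R axis i3 1)"
    have "\<bar>?w$i2\<bar> \<le> nrm ?w" using core_ge(2) core_le_nrm by (rule order_trans)
    also have "\<dots> \<le> op_norm nrm P" by (rule test) simp
    finally show ?thesis using Pv[of 0 1 "-1"] by (simp add: abs_le_iff)
  qed
  moreover have "1 + q$i1 + q$i2 \<le> op_norm nrm P"
  proof -
    let ?w = "P *v (0 *\<^sub>R axis i1 1 + (-1) *\<^sub>R axis i2 1 + (-1) *\<^sub>R axis i3 1)"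
    have "\<bar>?w$i1 + ?w$i2\<bar> \<le> nrm ?w" using core_ge(3) core_le_nrm by (rule order_trans)
    also have "\<dots> \<le> op_norm nrm P" by (rule test) simp
    finally show ?thesis using Pv[of 0 "-1" "-1"] by (simp add: abs_le_iff)
  qed
  ultimately show ?thesis by linarith
qed

lemma card_facts:
  "2 \<le> card S" "card S < CARD('n)" "int (card R) = int (card S) * (int CARD('n) - int (card S)) - 2"
proof -
  have "card {i1, i2} \<le> card S" using i1 i2 by (intro card_mono) auto
  then show k2: "2 \<le> card S" using i12 by simp
  have "card (insert i3 S) \<le> CARD('n)" by (rule card_mono) auto
  then show "card S < CARD('n)" using i3 by simp
  then have B: "int (card B) = int CARD('n) - int (card S) - 1"
    using i3 by (simp add: B_def Compl_eq_Diff_UNIV card_Diff_subset of_nat_diff)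
  have A: "int (card A) = int (card S) - 2"
    using i1 i2 i12 k2 by (simp add: A_def card_Diff_subset of_nat_diff)
  have "card R = card S * card B + card A"
    unfolding R_def using index_facts(6)
    by (subst card_Un_disjoint) (auto simp: card_cartesian_product)
  then have "int (card R) = int (card S) * int (card B) + int (card A)" by simp
  also have "\<dots> = int (card S) * (int CARD('n) - int (card S) - 1) + (int (card S) - 2)"
    by (simp only: A B)
  finally show "int (card R) = int (card S) * (int CARD('n) - int (card S)) - 2"
    by (simp add: algebra_simps)
qed

lemma small_perturbations_of_P0:
  assumes "D \<in> supported_matrices R" "norm D < 1 / (9 * CARD('n))"
  shows "P0 + D \<in> projections (coord_subspace S)" "op_norm nrm (P0 + D) \<le> 4/3"
proof -
  show "P0 + D \<in> projections (coord_subspace S)" by (rule P0_plus_projection[OF assms(1)])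
  have "\<bar>D$i$j\<bar> \<le> 1 / (9 * CARD('n))" for i j
    using abs_matrix_entry_le_norm[of D i j] assms(2) by simp
  then have bound: "nrm ((P0 + D) *v x) \<le> 4/3 * nrm x" for x
    using assms(1) by (intro nrm_P0_plus_le) auto
  show "op_norm nrm (P0 + D) \<le> 4/3"
  proof (rule op_norm_least[OF is_norm_nrm])
    fix x assume "nrm x \<le> 1"
    with bound[of x] show "nrm ((P0 + D) *v x) \<le> 4/3" by linarith
  qed
qed

lemma rel_proj_const_nrm: "rel_proj_const nrm (coord_subspace S) = 4/3"
  using min_projections_ball_bounds(1)[where r = "1 / (9 * CARD('n))", OF is_norm_nrm
      subspace_supported_matrices[of R] _ small_perturbations_of_P0 op_norm_projection_ge] by simp

theorem aff_dim_min_projections_nrm: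
  "aff_dim (min_projections nrm (coord_subspace S)) = int (card S) * (int CARD('n) - int (card S)) - 2"
proof -
  have "int (card S) * (int CARD('n) - int (card S)) - 2 \<le> aff_dim (min_projections nrm (coord_subspace S))"
    using min_projections_ball_bounds(2)[where r = "1 / (9 * CARD('n))", OF is_norm_nrm
        subspace_supported_matrices[of R] _ small_perturbations_of_P0 op_norm_projection_ge] card_facts(3)
    by (simp add: dim_supported_matrices)
  moreover have "aff_dim (min_projections nrm (coord_subspace S)) \<le> int (card S) * (int CARD('n) - int (card S)) - 2"
    using aff_dim_min_projections_le_dim_codim_minus_2[OF is_norm_nrm subspace_coord_subspace]
      rel_proj_const_nrm card_facts(1,2) by (simp add: dim_coord_subspace)
  ultimately show ?thesis by linarith
qed

end

theorem mainTheorem1: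
  fixes k :: nat
  assumes "1 \<le> k" and "k \<le> CARD('n::finite) - 1"
  shows
   "(\<forall>(N :: real^'n \<Rightarrow> real) Y. is_norm N \<and> subspace Y \<and> dim Y = k \<longrightarrow>
        aff_dim (min_projections N Y) \<le> int k * (int CARD('n) - int k))
  \<and> (\<exists>(N :: real^'n \<Rightarrow> real) Y. is_norm N \<and> subspace Y \<and> dim Y = k \<and>
        aff_dim (min_projections N Y) = int k * (int CARD('n) - int k))
  \<and> (\<forall>(N :: real^'n \<Rightarrow> real) Y. is_norm N \<and> subspace Y \<and> dim Y = k \<and> rel_proj_const N Y > 1 \<longrightarrow>
        aff_dim (min_projections N Y) \<le> int k * (int CARD('n) - int k) - 2)
  \<and> (2 \<le> k \<longrightarrow> (\<exists>(N :: real^'n \<Rightarrow> real) Y. is_norm N \<and> subspace Y \<and> dim Y = k \<and>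
        rel_proj_const N Y > 1 \<and>
        aff_dim (min_projections N Y) = int k * (int CARD('n) - int k) - 2))"
proof (intro conjI allI impI)
  have k: "0 < k" "k < CARD('n)" using assms by linarith+
  obtain S :: "'n set" where S: "card S = k" using obtain_subset_with_card_n[of k "UNIV :: 'n set"] k by auto
  then have Y: "subspace (coord_subspace S)" "dim (coord_subspace S) = k"
    by (simp_all add: subspace_coord_subspace dim_coord_subspace)
  show "aff_dim (min_projections N Y) \<le> int k * (int CARD('n) - int k)"
    if "is_norm N \<and> subspace Y \<and> dim Y = k" for N :: "real^'n \<Rightarrow> real" and Y
    using that aff_dim_min_projections_le_dim_codim by blast
  show "\<exists>(N :: real^'n \<Rightarrow> real) Y. is_norm N \<and> subspace Y \<and> dim Y = k \<and>
      aff_dim (min_projections N Y) = int k * (int CARD('n) - int k)"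
    using is_norm_l1_norm Y aff_dim_min_projections_l1_norm[of S] S k by (metis card.empty less_not_refl2)
  show "aff_dim (min_projections N Y) \<le> int k * (int CARD('n) - int k) - 2"
    if "is_norm N \<and> subspace Y \<and> dim Y = k \<and> rel_proj_const N Y > 1" for N :: "real^'n \<Rightarrow> real" and Y
    using that k aff_dim_min_projections_le_dim_codim_minus_2 by blast
  assume "2 \<le> k"
  then obtain T where "T \<subseteq> S" "card T = 2" using obtain_subset_with_card_n[of 2 S] S by auto
  then obtain i1 i2 where "i1 \<in> S" "i2 \<in> S" "i1 \<noteq> i2" by (auto simp: card_2_iff)
  moreover have "S \<noteq> UNIV" using S k by auto
  then obtain i3 where "i3 \<notin> S" by blast
  ultimately interpret sharpness_example S i1 i2 i3 by unfold_locales
  show "\<exists>(N :: real^'n \<Rightarrow> real) Y. is_norm N \<and> subspace Y \<and> dim Y = k \<and>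
      rel_proj_const N Y > 1 \<and> aff_dim (min_projections N Y) = int k * (int CARD('n) - int k) - 2"
    using is_norm_nrm Y rel_proj_const_nrm aff_dim_min_projections_nrm S
    by (intro exI[of _ nrm] exI[of _ "coord_subspace S"]) simp
qed

end
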